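(* Let $R$ be a commutative ring with identity. If $\gamma_t(\Gamma(R)) = 2$ and $R$ is not isomorphic to $\mathbb{Z}_2\times D$ for any integral domain $D$, then $\gamma_t(\Gamma(R)) = \gamma(\Gamma(R))$.
   Context: All rings are commutative with identity. $Z(R)^*$ is the set of nonzero zero-divisors. The zero-divisor graph $\Gamma(R)$ has vertex set $Z(R)^*$; distinct $r,s$ are adjacent iff $rs=0$, and $x$ is adjacent to itself iff $x^2=0$. A dominating set is $X\subseteq Z(R)^*$ such that every vertex not in $X$ is adjacent to some element of $X$; a total dominating set is $X$ such that every vertex (including those in $X$) is adjacent to some element of $X$ (self-adjacency counts). $\gamma$ and $\gamma_t$ denote the respective minimum cardinalities. *)

theory Defs
  imports "HOL-Algebra.Chinese_Remainder" "HOL-Number_Theory.Residues" "HOL-Library.Extended_Nat"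
begin

text \<open>Nonzero zero-divisors Z(R)* of a ring R (vertex set of the zero-divisor graph).\<close>
definition zdiv_star :: "('a, 'm) ring_scheme \<Rightarrow> 'a set" where
  "zdiv_star R = {x \<in> carrier R. x \<noteq> \<zero>\<^bsub>R\<^esub> \<and>
     (\<exists>y \<in> carrier R. y \<noteq> \<zero>\<^bsub>R\<^esub> \<and> x \<otimes>\<^bsub>R\<^esub> y = \<zero>\<^bsub>R\<^esub>)}"

text \<open>Adjacency in Gamma(R): distinct r,s adjacent iff rs = 0; x adjacent to itself iff x^2 = 0.
  Both cases are captured by the product being zero (for vertices of Z(R)*).\<close>
definition zdg_adj :: "('a, 'm) ring_scheme \<Rightarrow> 'a \<Rightarrow> 'a \<Rightarrow> bool" where
  "zdg_adj R x y \<longleftrightarrow> x \<in> zdiv_star R \<and> y \<in> zdiv_star R \<and> x \<otimes>\<^bsub>R\<^esub> y = \<zero>\<^bsub>R\<^esub>"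

definition zdg_dominating :: "('a, 'm) ring_scheme \<Rightarrow> 'a set \<Rightarrow> bool" where
  "zdg_dominating R X \<longleftrightarrow> X \<subseteq> zdiv_star R \<and>
     (\<forall>v \<in> zdiv_star R - X. \<exists>x \<in> X. zdg_adj R v x)"

definition zdg_total_dominating :: "('a, 'm) ring_scheme \<Rightarrow> 'a set \<Rightarrow> bool" where
  "zdg_total_dominating R X \<longleftrightarrow> X \<subseteq> zdiv_star R \<and>
     (\<forall>v \<in> zdiv_star R. \<exists>x \<in> X. zdg_adj R v x)"

text \<open>Domination numbers as minimum cardinalities (\<infinity> if no finite such set exists).\<close>
definition zdg_gamma :: "('a, 'm) ring_scheme \<Rightarrow> enat" where
  "zdg_gamma R = (INF X \<in> {X. zdg_dominating R X \<and> finite X}. enat (card X))"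

definition zdg_gamma_t :: "('a, 'm) ring_scheme \<Rightarrow> enat" where
  "zdg_gamma_t R = (INF X \<in> {X. zdg_total_dominating R X \<and> finite X}. enat (card X))"

end

theory Submission imports Defs begin

text \<open>If \<open>\<gamma>(\<Gamma>(R)) < 2 \<le> \<gamma>\<^sub>t(\<Gamma>(R))\<close>, a single vertex \<open>x\<close> dominates \<open>\<Gamma>(R)\<close> but is not
  adjacent to itself, i.e. \<open>x\<^sup>2 \<noteq> 0\<close>. Then \<open>x\<^sup>2\<close> is a vertex different from \<open>x\<close> unless \<open>x\<close> is
  idempotent, and in that case \<open>r x \<in> {0, x}\<close> for every \<open>r\<close>, while the annihilator of \<open>x\<close> has
  no zero divisors. The Peirce decomposition \<open>R \<cong> R x \<times> R (1 - x)\<close> then exhibits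
  \<open>R \<cong> \<int>\<^sub>2 \<times> D\<close> with \<open>D\<close> a domain. Hence \<open>\<gamma> \<ge> 2\<close>, and \<open>\<gamma> \<le> \<gamma>\<^sub>t\<close> always.\<close>

text \<open>The ideal \<open>Ann(e) = R (1 - e)\<close> of an idempotent \<open>e\<close>, a ring with identity \<open>1 - e\<close>.\<close>
definition annihilator_ring :: "('a, 'm) ring_scheme \<Rightarrow> 'a \<Rightarrow> 'a ring" where
  "annihilator_ring R e =
     \<lparr>carrier = {r \<in> carrier R. r \<otimes>\<^bsub>R\<^esub> e = \<zero>\<^bsub>R\<^esub>}, monoid.mult = (\<otimes>\<^bsub>R\<^esub>),
      one = \<one>\<^bsub>R\<^esub> \<ominus>\<^bsub>R\<^esub> e, zero = \<zero>\<^bsub>R\<^esub>, add = (\<oplus>\<^bsub>R\<^esub>)\<rparr>"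

lemma RDirProd_simps:
  "(a, b) \<otimes>\<^bsub>RDirProd R S\<^esub> (c, d) = (a \<otimes>\<^bsub>R\<^esub> c, b \<otimes>\<^bsub>S\<^esub> d)"
  "(a, b) \<oplus>\<^bsub>RDirProd R S\<^esub> (c, d) = (a \<oplus>\<^bsub>R\<^esub> c, b \<oplus>\<^bsub>S\<^esub> d)"
  "\<one>\<^bsub>RDirProd R S\<^esub> = (\<one>\<^bsub>R\<^esub>, \<one>\<^bsub>S\<^esub>)"
  by (auto simp add: RDirProd_def DirProd_def monoid.defs)

context cring
begin

lemma mult_idem_distrib:
  assumes "x \<in> carrier R" "y \<in> carrier R" "u \<in> carrier R" "u \<otimes> u = u"
  shows "(x \<otimes> y) \<otimes> u = (x \<otimes> u) \<otimes> (y \<otimes> u)"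
proof -
  have "(x \<otimes> u) \<otimes> (y \<otimes> u) = (x \<otimes> y) \<otimes> (u \<otimes> u)" using assms(1-3) by algebra
  also have "\<dots> = (x \<otimes> y) \<otimes> u" using assms(4) by simp
  finally show ?thesis by (rule sym)
qed

context
  fixes e
  assumes e_carrier: "e \<in> carrier R" and e_idem: "e \<otimes> e = e"
begin

lemma idem_complement_carrier: "\<one> \<ominus> e \<in> carrier R"
  using e_carrier by simp

lemma idem_mult_complement: "e \<otimes> (\<one> \<ominus> e) = \<zero>"
proof -
  have "e \<otimes> (\<one> \<ominus> e) = e \<ominus> e \<otimes> e" using e_carrier by algebra
  then show ?thesis using e_carrier e_idem by (simp add: r_neg minus_eq)
qed

lemma idem_add_complement: "e \<oplus> (\<one> \<ominus> e) = \<one>"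
  using e_carrier by algebra

lemma idem_complement_mult_annihilated:
  assumes "d \<in> carrier R" "d \<otimes> e = \<zero>"
  shows "(\<one> \<ominus> e) \<otimes> d = d"
proof -
  have "(\<one> \<ominus> e) \<otimes> d = d \<ominus> d \<otimes> e" using e_carrier assms(1) by algebra
  then show ?thesis using assms by (simp add: minus_eq)
qed

lemma idem_complement_idem: "(\<one> \<ominus> e) \<otimes> (\<one> \<ominus> e) = \<one> \<ominus> e"
  using idem_complement_mult_annihilated[OF idem_complement_carrier]
    idem_mult_complement idem_complement_carrier e_carrier m_comm by metis

lemma annihilator_ring_cring: "cring (annihilator_ring R e)"
proof -
  let ?A = "{r \<in> carrier R. r \<otimes> e = \<zero>}"
  have carrier: "carrier (annihilator_ring R e) = ?A"
    and ops: "(\<otimes>\<^bsub>annihilator_ring R e\<^esub>) = (\<otimes>)" "(\<oplus>\<^bsub>annihilator_ring R e\<^esub>) = (\<oplus>)"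
    "\<one>\<^bsub>annihilator_ring R e\<^esub> = \<one> \<ominus> e" "\<zero>\<^bsub>annihilator_ring R e\<^esub> = \<zero>"
    by (simp_all add: annihilator_ring_def)
  show ?thesis
  proof (rule cringI)
    show "abelian_group (annihilator_ring R e)"
    proof (rule abelian_groupI, unfold carrier ops)
      fix x y z assume x: "x \<in> ?A" and y: "y \<in> ?A" and z: "z \<in> ?A"
      show "x \<oplus> y \<in> ?A" using x y e_carrier by (simp add: l_distr)
      show "x \<oplus> y \<oplus> z = x \<oplus> (y \<oplus> z)" using x y z by (simp add: a_assoc)
      show "x \<oplus> y = y \<oplus> x" using x y by (simp add: a_comm)
      show "\<zero> \<oplus> x = x" using x by simp
      show "\<exists>y\<in>?A. y \<oplus> x = \<zero>"
        using x e_carrier by (intro bexI[of _ "\<ominus> x"]) (auto simp: l_minus l_neg)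
    qed (use e_carrier in simp)
    show "comm_monoid (annihilator_ring R e)"
    proof (rule comm_monoidI, unfold carrier ops)
      fix x y z assume x: "x \<in> ?A" and y: "y \<in> ?A" and z: "z \<in> ?A"
      show "x \<otimes> y \<in> ?A" using x y mult_idem_distrib[OF _ _ e_carrier e_idem] by simp
      show "x \<otimes> y \<otimes> z = x \<otimes> (y \<otimes> z)" using x y z by (simp add: m_assoc)
      show "x \<otimes> y = y \<otimes> x" using x y by (simp add: m_comm)
      show "(\<one> \<ominus> e) \<otimes> x = x" using x idem_complement_mult_annihilated by simp
    qed (use idem_complement_carrier idem_mult_complement e_carrier m_comm in force)
  qed (auto simp: carrier ops l_distr)
qed

lemma annihilator_ring_domain:
  assumes "e \<noteq> \<one>"
    and no_zero_divisors: "\<And>a b. \<lbrakk>a \<in> carrier R; b \<in> carrier R; a \<otimes> e = \<zero>; b \<otimes> e = \<zero>;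
      a \<otimes> b = \<zero>\<rbrakk> \<Longrightarrow> a = \<zero> \<or> b = \<zero>"
  shows "domain (annihilator_ring R e)"
proof (intro domain.intro annihilator_ring_cring domain_axioms.intro)
  have "\<one> \<ominus> e \<noteq> \<zero>"
    using idem_add_complement assms(1) e_carrier by (metis r_zero)
  then show "\<one>\<^bsub>annihilator_ring R e\<^esub> \<noteq> \<zero>\<^bsub>annihilator_ring R e\<^esub>"
    by (simp add: annihilator_ring_def)
qed (use no_zero_divisors in \<open>auto simp: annihilator_ring_def\<close>)

text \<open>When \<open>R e = {0, e}\<close>, the first Peirce component \<open>R e\<close> is \<open>\<int>\<^sub>2\<close>; the isomorphism is
  \<open>x \<mapsto> ([x e \<noteq> 0], x (1 - e))\<close>.\<close>
lemma residue_2_product_iso: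
  assumes "e \<noteq> \<zero>" and two_valued: "\<And>r. r \<in> carrier R \<Longrightarrow> r \<otimes> e = \<zero> \<or> r \<otimes> e = e"
  shows "R \<simeq> RDirProd (residue_ring 2) (annihilator_ring R e)"
proof -
  define f where "f = \<one> \<ominus> e"
  define A where "A = annihilator_ring R e"
  define \<phi> where "\<phi> = (\<lambda>x. (if x \<otimes> e = \<zero> then 0::int else 1, x \<otimes> f))"
  have fc: "f \<in> carrier R" and ef: "e \<otimes> f = \<zero>" and ff: "f \<otimes> f = f" and fe: "f \<otimes> e = \<zero>"
    using idem_complement_carrier idem_mult_complement idem_complement_idem e_carrier m_comm
    unfolding f_def by metis+
  have A: "carrier A = {r \<in> carrier R. r \<otimes> e = \<zero>}" "(\<otimes>\<^bsub>A\<^esub>) = (\<otimes>)" "(\<oplus>\<^bsub>A\<^esub>) = (\<oplus>)"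
    "\<one>\<^bsub>A\<^esub> = f"
    by (simp_all add: A_def f_def annihilator_ring_def)
  have char_2: "e \<oplus> e = \<zero>"
  proof -
    have "(e \<oplus> e) \<otimes> e = e \<oplus> e" using e_carrier e_idem by (simp add: l_distr)
    moreover have "e \<oplus> e \<noteq> e" using e_carrier assms(1) by (metis add.l_cancel_one r_zero)
    ultimately show ?thesis using two_valued e_carrier by (metis add.m_closed)
  qed
  have decompose: "x = x \<otimes> e \<oplus> x \<otimes> f" if "x \<in> carrier R" for x
    using idem_add_complement e_carrier fc that unfolding f_def by (metis r_distr r_one)
  have image: "\<phi> x \<in> carrier (RDirProd (residue_ring 2) A)" if "x \<in> carrier R" for x
    using that fc fe e_carrier by (auto simp: \<phi>_def A RDirProd_carrier residue_ring_def m_assoc)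
  have surjective: "p \<in> \<phi> ` carrier R" if p_carrier: "p \<in> carrier (RDirProd (residue_ring 2) A)" for p
  proof -
    obtain a d where p: "p = (a, d)" "a \<in> {0..1}" "d \<in> carrier R" "d \<otimes> e = \<zero>"
      using p_carrier by (auto simp: A RDirProd_carrier residue_ring_def)
    have df: "d \<otimes> f = d"
      using idem_complement_mult_annihilated p fc m_comm unfolding f_def by metis
    from p(2) have "a = 0 \<or> a = 1" by auto
    then show ?thesis
    proof
      assume "a = 0"
      then show ?thesis using p df by (auto simp: \<phi>_def image_iff intro!: bexI[of _ d])
    next
      assume "a = 1"
      moreover have "(e \<oplus> d) \<otimes> e = e" using e_carrier e_idem p by (simp add: l_distr)
      moreover have "(e \<oplus> d) \<otimes> f = d" using e_carrier p fc ef df by (simp add: l_distr)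
      ultimately show ?thesis
        using p e_carrier assms(1) by (auto simp: \<phi>_def image_iff intro!: bexI[of _ "e \<oplus> d"])
    qed
  qed
  have "\<phi> \<in> ring_iso R (RDirProd (residue_ring 2) A)"
  proof (rule ring_iso_memI)
    show "\<phi> (x \<otimes> y) = \<phi> x \<otimes>\<^bsub>RDirProd (residue_ring 2) A\<^esub> \<phi> y"
      if "x \<in> carrier R" "y \<in> carrier R" for x y
    proof -
      have "(x \<otimes> y) \<otimes> e = (x \<otimes> e) \<otimes> (y \<otimes> e)" and "(x \<otimes> y) \<otimes> f = (x \<otimes> f) \<otimes> (y \<otimes> f)"
        using mult_idem_distrib that e_carrier e_idem fc ff by auto
      then show ?thesis
        using two_valued[OF that(1)] two_valued[OF that(2)] e_idem e_carrier assms(1)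
        by (auto simp: \<phi>_def RDirProd_simps A residue_ring_def)
    qed
    show "\<phi> (x \<oplus> y) = \<phi> x \<oplus>\<^bsub>RDirProd (residue_ring 2) A\<^esub> \<phi> y"
      if "x \<in> carrier R" "y \<in> carrier R" for x y
    proof -
      have "(x \<oplus> y) \<otimes> e = (x \<otimes> e) \<oplus> (y \<otimes> e)" and "(x \<oplus> y) \<otimes> f = (x \<otimes> f) \<oplus> (y \<otimes> f)"
        using that e_carrier fc by (simp_all add: l_distr)
      then show ?thesis
        using two_valued[OF that(1)] two_valued[OF that(2)] e_carrier char_2
        by (auto simp: \<phi>_def RDirProd_simps A residue_ring_def)
    qed
    show "\<phi> \<one> = \<one>\<^bsub>RDirProd (residue_ring 2) A\<^esub>"
      using e_carrier fc assms(1) by (auto simp: \<phi>_def RDirProd_simps A residue_ring_def)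
    show "bij_betw \<phi> (carrier R) (carrier (RDirProd (residue_ring 2) A))"
    proof (rule bij_betw_imageI)
      show "inj_on \<phi> (carrier R)"
      proof (rule inj_onI)
        fix x y assume xy: "x \<in> carrier R" "y \<in> carrier R" "\<phi> x = \<phi> y"
        then have "x \<otimes> f = y \<otimes> f" by (simp add: \<phi>_def)
        moreover have "x \<otimes> e = y \<otimes> e"
          using xy two_valued[OF xy(1)] two_valued[OF xy(2)] by (auto simp: \<phi>_def split: if_splits)
        ultimately show "x = y" using decompose xy by metis
      qed
    qed (use image surjective in blast)
  qed (use image in blast)
  then show ?thesis unfolding A_def is_ring_iso_def by blast
qed

end

lemma universal_vertex_idem:
  assumes x: "x \<in> zdiv_star R" and x_sq: "x \<otimes> x \<noteq> \<zero>"
    and universal: "\<And>v. \<lbrakk>v \<in> zdiv_star R; v \<noteq> x\<rbrakk> \<Longrightarrow> v \<otimes> x = \<zero>"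
  shows "x \<otimes> x = x"
proof (rule ccontr)
  assume ne: "x \<otimes> x \<noteq> x"
  obtain y where xc: "x \<in> carrier R" and y: "y \<in> carrier R" "y \<noteq> \<zero>" "x \<otimes> y = \<zero>"
    using x unfolding zdiv_star_def by auto
  have "x \<otimes> x \<in> zdiv_star R"
    unfolding zdiv_star_def using xc x_sq y by (auto simp: m_assoc intro!: bexI[of _ y])
  then have x3: "(x \<otimes> x) \<otimes> x = \<zero>" using universal ne by blast
  txt \<open>\<open>w = x + x\<^sup>2\<close> is a vertex (it kills \<open>x\<^sup>2\<close>) with \<open>w x = x\<^sup>2 \<noteq> 0\<close>, so universality
    forces \<open>w = x\<close>, i.e. \<open>x\<^sup>2 = 0\<close>.\<close>
  define w where "w = x \<oplus> x \<otimes> x"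
  have wx: "w \<otimes> x = x \<otimes> x" using xc x3 by (simp add: w_def l_distr)
  have "x \<otimes> (x \<otimes> x) = \<zero>" using x3 xc by (simp add: m_comm)
  moreover have "(x \<otimes> x) \<otimes> (x \<otimes> x) = \<zero>" using x3 xc by (simp add: m_assoc[symmetric])
  ultimately have "w \<otimes> (x \<otimes> x) = \<zero>" using xc by (simp add: w_def l_distr)
  moreover have "w \<noteq> \<zero>" using wx x_sq xc by auto
  ultimately have "w \<in> zdiv_star R" unfolding zdiv_star_def using xc x_sq by (auto simp: w_def)
  moreover have "w \<noteq> x"
    using add.l_cancel_one[of x "x \<otimes> x"] xc x_sq by (auto simp: w_def)
  ultimately show False using universal wx x_sq by simp
qed

lemma universal_vertex_residue_2_product:
  assumes x: "x \<in> zdiv_star R" and x_sq: "x \<otimes> x \<noteq> \<zero>"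
    and universal: "\<And>v. \<lbrakk>v \<in> zdiv_star R; v \<noteq> x\<rbrakk> \<Longrightarrow> v \<otimes> x = \<zero>"
  shows "\<exists>D::'a ring. domain D \<and> R \<simeq> RDirProd (residue_ring 2) D"
proof -
  obtain y where xc: "x \<in> carrier R" and x0: "x \<noteq> \<zero>" and y: "y \<in> carrier R" "y \<noteq> \<zero>" "x \<otimes> y = \<zero>"
    using x unfolding zdiv_star_def by auto
  have idem: "x \<otimes> x = x" using universal_vertex_idem assms by blast
  have two_valued: "r \<otimes> x = \<zero> \<or> r \<otimes> x = x" if rc: "r \<in> carrier R" for r
  proof (rule ccontr)
    assume other: "\<not> ?thesis"
    moreover have "r \<otimes> x \<in> zdiv_star R \<or> r \<otimes> x = \<zero>"
      unfolding zdiv_star_def using rc xc y by (auto simp: m_assoc intro!: bexI[of _ y])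
    ultimately have "(r \<otimes> x) \<otimes> x = \<zero>" using universal by blast
    then show False using other rc xc idem by (simp add: m_assoc)
  qed
  have no_zero_divisors: "a = \<zero> \<or> b = \<zero>"
    if ab: "a \<in> carrier R" "b \<in> carrier R" "a \<otimes> x = \<zero>" "b \<otimes> x = \<zero>" "a \<otimes> b = \<zero>" for a b
  proof (rule ccontr)
    assume nonzero: "\<not> ?thesis"
    txt \<open>Otherwise \<open>a + x\<close> is a vertex (it kills \<open>b\<close>) other than \<open>x\<close> with \<open>(a + x) x = x \<noteq> 0\<close>.\<close>
    have "x \<otimes> b = \<zero>" using ab xc by (simp add: m_comm)
    then have "(a \<oplus> x) \<otimes> b = \<zero>" using ab xc by (simp add: l_distr)
    moreover have ax: "(a \<oplus> x) \<otimes> x = x" using ab xc idem by (simp add: l_distr)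
    ultimately have "a \<oplus> x \<in> zdiv_star R" unfolding zdiv_star_def using ab xc x0 nonzero by auto
    moreover have "a \<oplus> x \<noteq> x" using nonzero ab xc by simp
    ultimately show False using universal ax x0 by simp
  qed
  have "x \<noteq> \<one>" using y by auto
  then show ?thesis
    using annihilator_ring_domain[OF xc idem] residue_2_product_iso[OF xc idem x0]
      two_valued no_zero_divisors by blast
qed

end

lemma zdg_gamma_le_gamma_t: "zdg_gamma R \<le> zdg_gamma_t R"
  unfolding zdg_gamma_def zdg_gamma_t_def zdg_total_dominating_def zdg_dominating_def
  by (rule INF_superset_mono) auto

lemma zdg_gamma_t_le_card: "\<lbrakk>zdg_total_dominating R X; finite X\<rbrakk> \<Longrightarrow> zdg_gamma_t R \<le> card X"
  unfolding zdg_gamma_t_def by (rule INF_lower) simp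

lemma (in cring) zdg_dominating_card_ge_2:
  assumes X: "zdg_dominating R X" "finite X" and gamma_t: "zdg_gamma_t R \<ge> 2"
    and not_product: "\<not> (\<exists>D :: 'a ring. domain D \<and> R \<simeq> RDirProd (residue_ring 2) D)"
  shows "card X \<ge> 2"
proof (rule ccontr)
  assume "\<not> card X \<ge> 2"
  then consider "X = {}" | x where "X = {x}"
    using X(2) by (metis One_nat_def card_1_singletonE card_0_eq less_2_cases not_le)
  then show False
  proof cases
    case 1
    then have "zdg_total_dominating R {}"
      using X(1) by (auto simp: zdg_dominating_def zdg_total_dominating_def)
    then show False using zdg_gamma_t_le_card[of R "{}"] gamma_t order.trans
      by (fastforce simp: numeral_eq_enat)
  next
    case (2 x)
    then have x: "x \<in> zdiv_star R"
      and universal: "\<And>v. \<lbrakk>v \<in> zdiv_star R; v \<noteq> x\<rbrakk> \<Longrightarrow> v \<otimes> x = \<zero>"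
      using X(1) by (auto simp: zdg_dominating_def zdg_adj_def)
    show False
    proof (cases "x \<otimes> x = \<zero>")
      case True
      then have "zdg_total_dominating R {x}"
        using x universal by (auto simp: zdg_total_dominating_def zdg_adj_def)
      then show False using zdg_gamma_t_le_card[of R "{x}"] gamma_t order.trans
        by (fastforce simp: numeral_eq_enat)
    next
      case False
      then show False using universal_vertex_residue_2_product x universal not_product by blast
    qed
  qed
qed

theorem proposition3p3:
  fixes R :: "'a ring"
  assumes "cring R"
    and "zdg_gamma_t R = 2"
    and "\<not> (\<exists>D :: 'a ring. domain D \<and> R \<simeq> RDirProd (residue_ring 2) D)"
  shows "zdg_gamma_t R = zdg_gamma R"
proof -
  have "2 \<le> zdg_gamma R"
    unfolding zdg_gamma_def
  proof (rule INF_greatest)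
    fix X assume "X \<in> {X. zdg_dominating R X \<and> finite X}"
    then have "card X \<ge> 2"
      using cring.zdg_dominating_card_ge_2[OF assms(1)] assms(2,3) by simp
    then show "2 \<le> enat (card X)" by (simp add: numeral_eq_enat)
  qed
  then show ?thesis using zdg_gamma_le_gamma_t[of R] assms(2) by simp
qed

end
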